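(* Let $T$ be a tree and $x,y$ distinct leaves of $T$. Let $P$ be the $xy$-path in $T$, and let $x',y'$ be the vertices of $T$ adjacent to $x$ and $y$, respectively. Write $V(P)=\{0,1,\ldots,r\}$ along the path with $x=0$ and $y=r$. For $i\in\{1,\ldots,r-1\}$ let $T_i$ be the union of the components of $T-V(P)$ that are adjacent to vertex $i$ in $T$ (the empty graph if there are none). If $T'$ is the tree obtained from $T$ by deleting $x$ and adding a new leaf adjacent to $y'$, then $$W(T')-W(T)=\sum_{i=1}^{r-1}(r-2i)|V(T_i)|-(r-2).$$
   Context: All graphs are finite and simple; $d(u,v)$ denotes distance and $W(G)=\sum_{\{u,v\}\subseteq V(G)} d(u,v)$ is the Wiener index (sum over unordered pairs of vertices). A leaf is a vertex of degree $1$. *)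

theory Defs
  imports Main
begin

definition simple_graph :: "'a set \<Rightarrow> ('a \<Rightarrow> 'a \<Rightarrow> bool) \<Rightarrow> bool" where
  "simple_graph V E \<longleftrightarrow> finite V \<and> (\<forall>u v. E u v \<longrightarrow> E v u) \<and> (\<forall>u. \<not> E u u)
     \<and> (\<forall>u v. E u v \<longrightarrow> u \<in> V \<and> v \<in> V)"

definition walk_in :: "'a set \<Rightarrow> ('a \<Rightarrow> 'a \<Rightarrow> bool) \<Rightarrow> 'a list \<Rightarrow> bool" where
  "walk_in S E p \<longleftrightarrow> p \<noteq> [] \<and> set p \<subseteq> S \<and> (\<forall>i. Suc i < length p \<longrightarrow> E (p ! i) (p ! Suc i))"

definition reach_in :: "'a set \<Rightarrow> ('a \<Rightarrow> 'a \<Rightarrow> bool) \<Rightarrow> 'a \<Rightarrow> 'a \<Rightarrow> bool" where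
  "reach_in S E u v \<longleftrightarrow> (\<exists>p. walk_in S E p \<and> hd p = u \<and> last p = v)"

definition is_path :: "'a set \<Rightarrow> ('a \<Rightarrow> 'a \<Rightarrow> bool) \<Rightarrow> 'a list \<Rightarrow> 'a \<Rightarrow> 'a \<Rightarrow> bool" where
  "is_path V E p u v \<longleftrightarrow> walk_in V E p \<and> distinct p \<and> hd p = u \<and> last p = v"

definition has_cycle :: "'a set \<Rightarrow> ('a \<Rightarrow> 'a \<Rightarrow> bool) \<Rightarrow> bool" where
  "has_cycle V E \<longleftrightarrow> (\<exists>c. walk_in V E c \<and> distinct c \<and> length c \<ge> 3 \<and> E (last c) (hd c))"

definition connected_graph :: "'a set \<Rightarrow> ('a \<Rightarrow> 'a \<Rightarrow> bool) \<Rightarrow> bool" where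
  "connected_graph V E \<longleftrightarrow> (\<forall>u\<in>V. \<forall>v\<in>V. reach_in V E u v)"

definition is_tree :: "'a set \<Rightarrow> ('a \<Rightarrow> 'a \<Rightarrow> bool) \<Rightarrow> bool" where
  "is_tree V E \<longleftrightarrow> simple_graph V E \<and> V \<noteq> {} \<and> connected_graph V E \<and> \<not> has_cycle V E"

definition degree :: "'a set \<Rightarrow> ('a \<Rightarrow> 'a \<Rightarrow> bool) \<Rightarrow> 'a \<Rightarrow> nat" where
  "degree V E u = card {v\<in>V. E u v}"

definition leaf :: "'a set \<Rightarrow> ('a \<Rightarrow> 'a \<Rightarrow> bool) \<Rightarrow> 'a \<Rightarrow> bool" where
  "leaf V E u \<longleftrightarrow> u \<in> V \<and> degree V E u = 1"

definition gdist :: "'a set \<Rightarrow> ('a \<Rightarrow> 'a \<Rightarrow> bool) \<Rightarrow> 'a \<Rightarrow> 'a \<Rightarrow> nat" where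
  "gdist V E u v = (LEAST n. \<exists>p. walk_in V E p \<and> hd p = u \<and> last p = v \<and> length p = Suc n)"

definition wiener :: "'a set \<Rightarrow> ('a \<Rightarrow> 'a \<Rightarrow> bool) \<Rightarrow> nat" where
  "wiener V E = (\<Sum>e\<in>{e. e \<subseteq> V \<and> card e = 2}.
      (THE d. \<exists>u v. e = {u, v} \<and> d = gdist V E u v))"

text \<open>Vertex set of T_i: union of components of T - V(P) adjacent to the i-th path vertex.\<close>
definition branch_verts :: "'a set \<Rightarrow> ('a \<Rightarrow> 'a \<Rightarrow> bool) \<Rightarrow> 'a list \<Rightarrow> nat \<Rightarrow> 'a set" where
  "branch_verts V E p i = {v \<in> V - set p. \<exists>w. reach_in (V - set p) E v w \<and> E w (p ! i)}"

text \<open>T': delete leaf x and attach a new leaf z to y'.\<close>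
definition move_verts :: "'a set \<Rightarrow> 'a \<Rightarrow> 'a \<Rightarrow> 'a set" where
  "move_verts V x z = insert z (V - {x})"

definition move_edges :: "('a \<Rightarrow> 'a \<Rightarrow> bool) \<Rightarrow> 'a \<Rightarrow> 'a \<Rightarrow> 'a \<Rightarrow> 'a \<Rightarrow> 'a \<Rightarrow> bool" where
  "move_edges E x y' z u v \<longleftrightarrow> (E u v \<and> u \<noteq> x \<and> v \<noteq> x) \<or> (u = z \<and> v = y') \<or> (u = y' \<and> v = z)"

end

theory Submission
  imports Defs
begin

(* A leaf is never an inner vertex of a path, so deleting x and attaching z to y' changes no
   distance inside V - {x}.  Hence W(T') - W(T) is the sum over v in V - {x} of
   d'(z, v) - d(x, v) = d(y', v) - d(x', v), where x' = 1 and y' = r - 1 are the neighbours of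
   the leaves on the path 0, ..., r.  Each path vertex 1 <= i < r and every vertex of T_i, which
   is reached from both x' and y' through i, contribute (r - 1 - i) - (i - 1) = r - 2i; the
   vertex r contributes 1 - (r - 1) = 2 - r; and the contributions r - 2i of the inner path
   vertices add up to zero. *)

section \<open>Walks\<close>

lemma walk_in_Nil [simp]: "\<not> walk_in S E []"
  by (simp add: walk_in_def)

lemma walk_in_singleton [simp]: "walk_in S E [a] \<longleftrightarrow> a \<in> S"
  by (simp add: walk_in_def)

lemma walk_in_Cons_Cons [simp]:
  "walk_in S E (a # b # q) \<longleftrightarrow> a \<in> S \<and> E a b \<and> walk_in S E (b # q)"
  unfolding walk_in_def
  by (auto simp: less_Suc_eq_0_disj nth_Cons split: nat.split)

lemma walk_in_Cons: "walk_in S E (a # q) \<longleftrightarrow> a \<in> S \<and> (q = [] \<or> E a (hd q) \<and> walk_in S E q)"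
  by (cases q) auto

lemma walk_in_append:
  assumes "xs \<noteq> []" and "ys \<noteq> []"
  shows "walk_in S E (xs @ ys) \<longleftrightarrow> walk_in S E xs \<and> E (last xs) (hd ys) \<and> walk_in S E ys"
  using assms(1)
proof (induction xs rule: induct_list012)
  case (2 a)
  show ?case using assms(2) by (cases ys) auto
qed auto

lemma walk_in_appendD1: "walk_in S E (xs @ ys) \<Longrightarrow> xs \<noteq> [] \<Longrightarrow> walk_in S E xs"
  by (cases "ys = []") (auto simp: walk_in_append)

lemma walk_in_rev:
  assumes "symp E"
  shows "walk_in S E (rev q) \<longleftrightarrow> walk_in S E q"
proof -
  have *: "walk_in S E (rev q)" if "walk_in S E q" for q
    using that
  proof (induction q rule: induct_list012)
    case (3 a b r)
    then show ?case using walk_in_append[of "rev (b # r)" "[a]"] assms by (auto dest: sympD)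
  qed auto
  show ?thesis using *[of q] *[of "rev q"] by auto
qed

lemma walk_in_subset: "walk_in S E q \<Longrightarrow> set q \<subseteq> S"
  by (simp add: walk_in_def)

lemma walk_in_mono: "walk_in S E q \<Longrightarrow> set q \<subseteq> S' \<Longrightarrow> walk_in S' E q"
  by (simp add: walk_in_def)

lemma walk_in_nth_edge: "walk_in S E q \<Longrightarrow> Suc i < length q \<Longrightarrow> E (q ! i) (q ! Suc i)"
  by (simp add: walk_in_def)

lemma walk_in_shorten:
  assumes "walk_in S E w"
  obtains q where "walk_in S E q" "distinct q" "hd q = hd w" "last q = last w"
    "length q \<le> length w"
  using assms
proof (induction w arbitrary: thesis)
  case (Cons a r)
  show ?case
  proof (cases "r = []")
    case True
    then show ?thesis using Cons.prems by (intro Cons.prems(1)[of "[a]"]) auto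
  next
    case False
    then have a: "a \<in> S" "E a (hd r)" and "walk_in S E r"
      using Cons.prems(2) by (auto simp: walk_in_Cons)
    then obtain q where q: "walk_in S E q" "distinct q" "hd q = hd r" "last q = last r"
      "length q \<le> length r" using Cons.IH by blast
    show ?thesis
    proof (cases "a \<in> set q")
      case True
      then obtain ys zs where q_split: "q = ys @ a # zs" by (meson split_list)
      show ?thesis
      proof (rule Cons.prems(1)[of "a # zs"])
        show "walk_in S E (a # zs)"
          using q(1) q_split walk_in_append[of ys "a # zs"] by (cases ys) auto
      qed (use q q_split \<open>r \<noteq> []\<close> in auto)
    next
      case False
      show ?thesis
        by (rule Cons.prems(1)[of "a # q"]) (use q a False \<open>r \<noteq> []\<close> in \<open>auto simp: walk_in_Cons\<close>)
    qed
  qed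
qed simp

lemma reach_in_trans: "reach_in S E u v \<Longrightarrow> reach_in S E v w \<Longrightarrow> reach_in S E u w"
proof -
  assume "reach_in S E u v" "reach_in S E v w"
  then obtain a b where a: "walk_in S E a" "hd a = u" "last a = v"
    and b: "walk_in S E (v # b)" "last (v # b) = w" unfolding reach_in_def
    by (metis list.collapse walk_in_Nil)
  have "a \<noteq> []" using a(1) by auto
  then have "walk_in S E (a @ b) \<and> hd (a @ b) = u \<and> last (a @ b) = w"
    using a b walk_in_append[of a b] by (cases "b = []") (auto simp: walk_in_Cons)
  then show ?thesis unfolding reach_in_def by blast
qed

lemma reach_in_sym: "symp E \<Longrightarrow> reach_in S E u v \<Longrightarrow> reach_in S E v u"
  unfolding reach_in_def by (metis walk_in_rev hd_rev last_rev)

lemma walk_in_inner_vertex: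
  assumes "walk_in S E q" "distinct q" "w \<in> set q" "w \<noteq> hd q" "w \<noteq> last q"
  obtains a b where "E a w" "E w b" "a \<noteq> b"
proof -
  obtain us ws where q: "q = us @ w # ws" using assms(3) split_list by metis
  have "us \<noteq> []" "ws \<noteq> []" using assms(4,5) q by auto
  then have "E (last us) w" "E w (hd ws)"
    using assms(1) q walk_in_append[of us "w # ws"] by (auto simp: walk_in_Cons)
  moreover have "last us \<noteq> hd ws"
    using assms(2) q last_in_set[OF \<open>us \<noteq> []\<close>] hd_in_set[OF \<open>ws \<noteq> []\<close>] by auto
  ultimately show thesis using that by blast
qed

definition subpath :: "'a list \<Rightarrow> nat \<Rightarrow> nat \<Rightarrow> 'a list" where
  "subpath p i j = map ((!) p) [i..<Suc j]"

lemma length_subpath [simp]: "length (subpath p i j) = Suc j - i"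
  unfolding subpath_def by (simp only: length_map length_upt)

lemma nth_subpath: "k < Suc j - i \<Longrightarrow> subpath p i j ! k = p ! (i + k)"
  by (simp add: subpath_def del: upt_Suc)

lemma hd_subpath: "i \<le> j \<Longrightarrow> hd (subpath p i j) = p ! i"
  by (simp add: subpath_def hd_map upt_rec)

lemma last_subpath: "i \<le> j \<Longrightarrow> last (subpath p i j) = p ! j"
  by (simp add: subpath_def last_map)

lemma set_subpath: "set (subpath p i j) = (!) p ` {i..j}"
  by (auto simp: subpath_def)

lemma distinct_subpath: "distinct p \<Longrightarrow> j < length p \<Longrightarrow> distinct (subpath p i j)"
  by (auto simp: subpath_def distinct_map inj_on_def nth_eq_iff_index_eq)

lemma walk_in_subpath:
  assumes "walk_in S E p" "i \<le> j" "j < length p"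
  shows "walk_in S E (subpath p i j)"
  unfolding walk_in_def
proof (intro conjI allI impI)
  show "subpath p i j \<noteq> []" using assms(2) by (simp flip: length_greater_0_conv)
  show "set (subpath p i j) \<subseteq> S"
    using assms walk_in_subset[OF assms(1)] by (auto simp: set_subpath)
  fix k assume "Suc k < length (subpath p i j)"
  then show "E (subpath p i j ! k) (subpath p i j ! Suc k)"
    using assms walk_in_nth_edge[OF assms(1), of "i + k"] by (simp add: nth_subpath)
qed

section \<open>Paths and distances in acyclic graphs\<close>

lemma diverging_paths_imp_has_cycle:
  assumes "symp E"
    and w1: "walk_in V E (a # r1)" and w2: "walk_in V E (a # r2)"
    and d1: "distinct (a # r1)" and d2: "distinct (a # r2)"
    and "r1 \<noteq> []" "r2 \<noteq> []" "last r1 = last r2" "hd r1 \<noteq> hd r2"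
  shows "has_cycle V E"
proof -
  obtain ys b zs where r1: "r1 = ys @ b # zs" and "b \<in> set r2" and ys: "\<forall>y\<in>set ys. y \<notin> set r2"
    using split_list_first_propE[of r1 "\<lambda>v. v \<in> set r2"] assms(6-8) by (metis last_in_set)
  then obtain us ws where r2: "r2 = us @ b # ws" by (meson split_list)
  define c where "c = a # ys @ b # rev us"
  have "walk_in V E ((a # ys) @ [b])"
    using w1 walk_in_appendD1[of _ _ "a # ys @ [b]" zs] r1 by simp
  moreover have "walk_in V E (us @ [b])"
    using w2 walk_in_appendD1[of _ _ "us @ [b]" ws] r2 assms(7) by (simp add: walk_in_Cons)
  then have "walk_in V E (b # rev us)" using walk_in_rev[OF assms(1), of V "us @ [b]"] by simp
  ultimately have "walk_in V E c"
    unfolding c_def using walk_in_append[of "a # ys"] by simp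
  moreover have "E (last c) (hd c)"
  proof -
    have "E a (hd r2)" using w2 assms(7) by (simp add: walk_in_Cons)
    moreover have "last c = hd r2" unfolding c_def using r2 by (cases us) auto
    ultimately show ?thesis unfolding c_def using assms(1) by (auto dest: sympD)
  qed
  moreover have "distinct c" using d1 d2 r1 r2 ys unfolding c_def by auto
  moreover have "length c \<ge> 3" using r1 r2 assms(9) unfolding c_def by (cases ys; cases us) auto
  ultimately show ?thesis unfolding has_cycle_def by blast
qed

lemma acyclic_path_unique:
  assumes "symp E" "\<not> has_cycle V E"
  shows "walk_in V E q1 \<Longrightarrow> distinct q1 \<Longrightarrow> walk_in V E q2 \<Longrightarrow> distinct q2
    \<Longrightarrow> hd q1 = hd q2 \<Longrightarrow> last q1 = last q2 \<Longrightarrow> q1 = q2"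
proof (induction q1 arbitrary: q2)
  case (Cons a r1)
  obtain r2 where q2: "q2 = a # r2" using Cons.prems(3,5) by (cases q2) auto
  consider "r1 = []" | "r2 = []" | "r1 \<noteq> []" "r2 \<noteq> []" "hd r1 = hd r2"
    | "r1 \<noteq> []" "r2 \<noteq> []" "hd r1 \<noteq> hd r2" by blast
  then show ?case
  proof cases
    case 1
    then show ?thesis using Cons.prems(4,6) q2 by (metis distinct.simps(2) last.simps last_in_set)
  next
    case 2
    then show ?thesis using Cons.prems(2,6) q2 by (metis distinct.simps(2) last.simps last_in_set)
  next
    case 3
    then have "r1 = r2" using Cons.IH Cons.prems q2 by (auto simp: walk_in_Cons)
    then show ?thesis using q2 by simp
  next
    case 4
    then have "has_cycle V E"
      using diverging_paths_imp_has_cycle[OF assms(1)] Cons.prems q2 by auto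
    then show ?thesis using assms(2) by contradiction
  qed
qed simp

lemma gdist_eqI:
  assumes "walk_in S E q" "hd q = u" "last q = v"
    and shortest: "\<And>q'. walk_in S E q' \<Longrightarrow> distinct q' \<Longrightarrow> hd q' = u \<Longrightarrow> last q' = v
      \<Longrightarrow> length q \<le> length q'"
  shows "gdist S E u v = length q - 1"
  unfolding gdist_def
proof (rule Least_equality)
  show "\<exists>p. walk_in S E p \<and> hd p = u \<and> last p = v \<and> length p = Suc (length q - 1)"
    using assms(1-3) by (intro exI[of _ q]) (cases q, auto)
next
  fix n assume "\<exists>p. walk_in S E p \<and> hd p = u \<and> last p = v \<and> length p = Suc n"
  then obtain w where "walk_in S E w" "hd w = u" "last w = v" "length w = Suc n" by blast
  then show "length q - 1 \<le> n"
    by (metis walk_in_shorten shortest diff_le_mono diff_Suc_1 le_trans)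
qed

lemma gdist_commute:
  assumes "symp E"
  shows "gdist S E u v = gdist S E v u"
proof -
  have "(\<exists>w. walk_in S E w \<and> hd w = u \<and> last w = v \<and> length w = n)
    \<longleftrightarrow> (\<exists>w. walk_in S E w \<and> hd w = v \<and> last w = u \<and> length w = n)" for n
    by (metis assms walk_in_rev last_rev length_rev rev_rev_ident)
  then show ?thesis unfolding gdist_def by simp
qed

lemma gdist_acyclic:
  assumes "symp E" "\<not> has_cycle V E" "walk_in V E q" "distinct q"
  shows "gdist V E (hd q) (last q) = length q - 1"
  using gdist_eqI[OF assms(3) refl refl] acyclic_path_unique[OF assms(1,2,3,4)] by fastforce

lemma gdist_subpath:
  assumes "symp E" "\<not> has_cycle V E" "walk_in V E p" "distinct p" "i \<le> j" "j < length p"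
  shows "gdist V E (p ! i) (p ! j) = j - i"
  using gdist_acyclic[OF assms(1,2) walk_in_subpath[OF assms(3,5,6)]
      distinct_subpath[OF assms(4,6)]]
  by (simp add: hd_subpath last_subpath assms(5))

lemma gdist_to_branch:
  assumes "symp E" "\<not> has_cycle V E" "walk_in V E p" "distinct p" "i < length p" "j < length p"
    and q: "walk_in (V - set p) E q" "distinct q" "E (p ! i) (hd q)"
  shows "gdist V E (p ! j) (last q) = gdist V E (p ! j) (p ! i) + length q"
proof -
  obtain s where s: "walk_in V E s" "distinct s" "hd s = p ! j" "last s = p ! i" "set s \<subseteq> set p"
  proof (cases "j \<le> i")
    case True
    show thesis
      by (rule that[of "subpath p j i"])
        (use True assms(3-6) in \<open>auto simp: walk_in_subpath distinct_subpath hd_subpath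
          last_subpath set_subpath\<close>)
  next
    case False
    show thesis
      by (rule that[of "rev (subpath p i j)"])
        (use False assms(3-6) in \<open>auto simp: walk_in_rev[OF assms(1)] walk_in_subpath
          distinct_subpath hd_subpath last_subpath set_subpath hd_rev last_rev\<close>)
  qed
  have "q \<noteq> []" "s \<noteq> []" using q(1) s(1) by auto
  have "set q \<subseteq> V - set p" using walk_in_subset[OF q(1)] .
  then have "walk_in V E q" using walk_in_mono[OF q(1)] by blast
  then have "walk_in V E (s @ q)" "distinct (s @ q)"
    using s q \<open>set q \<subseteq> V - set p\<close> walk_in_append[OF \<open>s \<noteq> []\<close> \<open>q \<noteq> []\<close>] by auto
  then have "gdist V E (p ! j) (last q) = length (s @ q) - 1"
    using gdist_acyclic[OF assms(1,2)] s(3) \<open>q \<noteq> []\<close> \<open>s \<noteq> []\<close> by fastforce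
  moreover have "gdist V E (p ! j) (p ! i) = length s - 1"
    using gdist_acyclic[OF assms(1,2) s(1,2)] s(3,4) by simp
  ultimately show ?thesis using \<open>s \<noteq> []\<close> by (cases s) auto
qed

lemma is_treeD:
  assumes "is_tree V E"
  shows "finite V" "symp E" "\<not> E u u" "E u v \<Longrightarrow> u \<in> V" "E u v \<Longrightarrow> v \<in> V"
    "\<not> has_cycle V E" "u \<in> V \<Longrightarrow> v \<in> V \<Longrightarrow> reach_in V E u v"
  using assms unfolding is_tree_def simple_graph_def connected_graph_def
  by (auto intro: sympI)

lemma leaf_neighbour_unique:
  assumes "leaf V E w" "E w a" "E w b" "a \<in> V" "b \<in> V"
  shows "a = b"
proof -
  have "card {v \<in> V. E w v} = 1" using assms(1) by (simp add: leaf_def degree_def)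
  then obtain c where "{v \<in> V. E w v} = {c}" by (rule card_1_singletonE)
  then show ?thesis using assms(2-5) by (metis (mono_tags, lifting) mem_Collect_eq singletonD)
qed

lemma tree_path_avoiding_leaf:
  assumes tree: "is_tree V E" and "leaf V E l" "u \<in> V" "v \<in> V" "u \<noteq> l" "v \<noteq> l"
  obtains P where "walk_in V E P" "distinct P" "hd P = u" "last P = v" "l \<notin> set P"
proof -
  obtain W where "walk_in V E W" "hd W = u" "last W = v"
    using is_treeD(7)[OF tree] assms(3,4) unfolding reach_in_def by blast
  then obtain P where P: "walk_in V E P" "distinct P" "hd P = u" "last P = v"
    by (metis walk_in_shorten)
  moreover have "l \<notin> set P"
  proof
    assume "l \<in> set P"
    then obtain c d where "E c l" "E l d" "c \<noteq> d"
      using walk_in_inner_vertex[OF P(1,2)] P(3,4) assms(5,6) by metis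
    then show False
      using leaf_neighbour_unique[OF assms(2)] is_treeD(2,4,5)[OF tree] by (metis sympD)
  qed
  ultimately show thesis using that by blast
qed

lemma gdist_leaf:
  assumes tree: "is_tree V E" and "leaf V E l" "E l a" "v \<in> V" "v \<noteq> l"
  shows "gdist V E l v = gdist V E a v + 1"
proof -
  have "a \<in> V" "a \<noteq> l" using assms(3) is_treeD(3,5)[OF tree] by blast+
  then obtain P where P: "walk_in V E P" "distinct P" "hd P = a" "last P = v" "l \<notin> set P"
    using tree_path_avoiding_leaf[OF tree assms(2) _ assms(4) _ assms(5)] by blast
  have "l \<in> V" using assms(2) by (simp add: leaf_def)
  then have "walk_in V E (l # P)" "distinct (l # P)" using P assms(3) by (auto simp: walk_in_Cons)
  then have "gdist V E l v = length P"
    using gdist_acyclic[OF is_treeD(2,6)[OF tree]] P(1,4) by (cases P) fastforce+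
  moreover have "gdist V E a v = length P - 1"
    using gdist_acyclic[OF is_treeD(2,6)[OF tree] P(1,2)] P(3,4) by simp
  ultimately show ?thesis using P(1) by (cases P) auto
qed

lemma branch_verts_path:
  assumes "symp E" "v \<in> branch_verts V E p i"
  obtains q where "walk_in (V - set p) E q" "distinct q" "E (p ! i) (hd q)" "last q = v"
proof -
  obtain w where "reach_in (V - set p) E w v" "E (p ! i) w"
    using assms unfolding branch_verts_def by (blast dest: reach_in_sym sympD)
  then show thesis
    using that unfolding reach_in_def by (metis walk_in_shorten)
qed

lemma branch_verts_disjoint:
  assumes sym: "symp E" and acyclic: "\<not> has_cycle V E"
    and p: "walk_in V E p" "distinct p" and ij: "i < j" "j < length p"
  shows "branch_verts V E p i \<inter> branch_verts V E p j = {}"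
proof (rule ccontr)
  assume "branch_verts V E p i \<inter> branch_verts V E p j \<noteq> {}"
  then obtain v w1 w2 where "reach_in (V - set p) E v w1" "E w1 (p ! i)"
    and "reach_in (V - set p) E v w2" "E w2 (p ! j)"
    unfolding branch_verts_def by blast
  then have "reach_in (V - set p) E w1 w2" by (meson reach_in_sym reach_in_trans sym)
  then obtain c where c: "walk_in (V - set p) E c" "distinct c" "hd c = w1" "last c = w2"
    unfolding reach_in_def by (metis walk_in_shorten)
  have "c \<noteq> []" "set c \<subseteq> V - set p" using c(1) walk_in_subset by auto
  then have "walk_in V E c" using walk_in_mono[OF c(1)] by blast
  have "p ! i \<in> V" "p ! j \<in> V" "p ! i \<noteq> p ! j"
    using ij walk_in_subset[OF p(1)] p(2) by (auto simp: nth_eq_iff_index_eq)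
  then have "walk_in V E (p ! i # c @ [p ! j])" "distinct (p ! i # c @ [p ! j])"
    using c \<open>c \<noteq> []\<close> \<open>set c \<subseteq> V - set p\<close> \<open>E w1 (p ! i)\<close> \<open>E w2 (p ! j)\<close> ij
      walk_in_append[of c "[p ! j]"] \<open>walk_in V E c\<close>
    by (auto simp: walk_in_Cons dest: sympD[OF sym])
  then have "p ! i # c @ [p ! j] = subpath p i j"
    using acyclic_path_unique[OF sym acyclic] ij p
    by (simp add: walk_in_subpath distinct_subpath hd_subpath last_subpath)
  moreover have "set (subpath p i j) \<subseteq> set p" using ij by (auto simp: set_subpath)
  moreover have "w1 \<in> set (p ! i # c @ [p ! j])" using c(3) hd_in_set[OF \<open>c \<noteq> []\<close>] by simp
  ultimately have "w1 \<in> set p" by auto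
  then show False using c(3) hd_in_set[OF \<open>c \<noteq> []\<close>] \<open>set c \<subseteq> V - set p\<close> by auto
qed

section \<open>Moving a leaf\<close>

lemma the_gdist_doubleton:
  assumes "symp E"
  shows "(THE d. \<exists>u' v'. {u, v} = {u', v'} \<and> d = gdist S E u' v') = gdist S E u v"
  by (rule the_equality) (auto simp: doubleton_eq_iff gdist_commute[OF assms])

lemma doubleton_subsets_insert:
  assumes "a \<notin> A"
  shows "{e. e \<subseteq> insert a A \<and> card e = 2} = {e. e \<subseteq> A \<and> card e = 2} \<union> (\<lambda>v. {a, v}) ` A"
proof (rule set_eqI, rule iffI)
  fix e assume "e \<in> {e. e \<subseteq> insert a A \<and> card e = 2}"
  then show "e \<in> {e. e \<subseteq> A \<and> card e = 2} \<union> (\<lambda>v. {a, v}) ` A"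
    using assms by (cases "a \<in> e") (auto simp: card_2_iff insert_commute)
qed (use assms in \<open>auto simp: card_2_iff\<close>)

lemma wiener_insert:
  assumes "finite A" "a \<notin> A" "symp E"
  shows "wiener (insert a A) E =
    (\<Sum>e\<in>{e. e \<subseteq> A \<and> card e = 2}. THE d. \<exists>u v. e = {u, v} \<and> d = gdist (insert a A) E u v)
    + (\<Sum>v\<in>A. gdist (insert a A) E a v)"
proof -
  let ?D = "\<lambda>e. THE d. \<exists>u v. e = {u, v} \<and> d = gdist (insert a A) E u v"
  have "finite {e. e \<subseteq> A \<and> card e = 2}" using assms(1) by simp
  moreover have "{e. e \<subseteq> A \<and> card e = 2} \<inter> (\<lambda>v. {a, v}) ` A = {}" using assms(2) by auto
  ultimately have "wiener (insert a A) E
      = sum ?D {e. e \<subseteq> A \<and> card e = 2} + sum ?D ((\<lambda>v. {a, v}) ` A)"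
    unfolding wiener_def doubleton_subsets_insert[OF assms(2)] using assms(1)
    by (simp add: sum.union_disjoint)
  also have "sum ?D ((\<lambda>v. {a, v}) ` A) = (\<Sum>v\<in>A. ?D {a, v})"
    using assms(2) by (subst sum.reindex) (auto simp: inj_on_def doubleton_eq_iff)
  also have "\<dots> = (\<Sum>v\<in>A. gdist (insert a A) E a v)"
    using the_gdist_doubleton[OF assms(3)] by simp
  finally show ?thesis .
qed

context
  fixes V :: "'a set" and E :: "'a \<Rightarrow> 'a \<Rightarrow> bool" and x y' z :: 'a
  assumes tree: "is_tree V E" and leaf_x: "leaf V E x"
    and y': "y' \<in> V" "y' \<noteq> x" and z: "z \<notin> V"
begin

lemma symp_move_edges: "symp (move_edges E x y' z)"
  using is_treeD(2)[OF tree] by (auto simp: move_edges_def symp_def)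

lemma move_edges_new_leaf: "move_edges E x y' z z b \<longleftrightarrow> b = y'"
  using is_treeD(4)[OF tree] z by (auto simp: move_edges_def)

lemma walk_in_move_edges:
  assumes "z \<notin> set q"
  shows "walk_in (move_verts V x z) (move_edges E x y' z) q \<longleftrightarrow> walk_in V E q \<and> x \<notin> set q"
  using assms z unfolding walk_in_def move_verts_def move_edges_def
  by (auto 4 4 dest: nth_mem)

lemma gdist_move_edges:
  assumes "u \<in> V - {x}" "v \<in> V - {x}"
  shows "gdist (move_verts V x z) (move_edges E x y' z) u v = gdist V E u v"
proof -
  obtain P where P: "walk_in V E P" "distinct P" "hd P = u" "last P = v" "x \<notin> set P"
    using tree_path_avoiding_leaf[OF tree leaf_x] assms by blast
  have "z \<notin> set P" using walk_in_subset[OF P(1)] z by auto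
  have "gdist (move_verts V x z) (move_edges E x y' z) u v = length P - 1"
  proof (rule gdist_eqI)
    show "walk_in (move_verts V x z) (move_edges E x y' z) P"
      using walk_in_move_edges[OF \<open>z \<notin> set P\<close>] P by blast
    fix q assume q: "walk_in (move_verts V x z) (move_edges E x y' z) q" "distinct q"
      "hd q = u" "last q = v"
    have "z \<notin> set q"
    proof
      assume "z \<in> set q"
      moreover have "z \<noteq> u" "z \<noteq> v" using assms z by auto
      ultimately obtain a b where "move_edges E x y' z a z" "move_edges E x y' z z b" "a \<noteq> b"
        using walk_in_inner_vertex[OF q(1,2)] q(3,4) by metis
      then show False using move_edges_new_leaf symp_move_edges by (metis sympD)
    qed
    then have "walk_in V E q" using walk_in_move_edges q(1) by blast
    then have "q = P" using acyclic_path_unique[OF is_treeD(2,6)[OF tree]] q P by blast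
    then show "length P \<le> length q" by simp
  qed (use P in auto)
  moreover have "gdist V E u v = length P - 1"
    using gdist_acyclic[OF is_treeD(2,6)[OF tree] P(1,2)] P(3,4) by simp
  ultimately show ?thesis by simp
qed

lemma gdist_move_edges_new_leaf:
  assumes "v \<in> V - {x}"
  shows "gdist (move_verts V x z) (move_edges E x y' z) z v = gdist V E y' v + 1"
proof -
  obtain P where P: "walk_in V E P" "distinct P" "hd P = y'" "last P = v" "x \<notin> set P"
    using tree_path_avoiding_leaf[OF tree leaf_x] assms y' by blast
  have "P \<noteq> []" "z \<notin> set P" using P(1) walk_in_subset[OF P(1)] z by auto
  then have walk: "walk_in (move_verts V x z) (move_edges E x y' z) (z # P)"
    using walk_in_move_edges[OF \<open>z \<notin> set P\<close>] P move_edges_new_leaf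
    by (simp add: walk_in_Cons move_verts_def)
  have "gdist (move_verts V x z) (move_edges E x y' z) z v = length (z # P) - 1"
  proof (rule gdist_eqI[OF walk])
    fix q assume q: "walk_in (move_verts V x z) (move_edges E x y' z) q" "distinct q"
      "hd q = z" "last q = v"
    have "v \<noteq> z" using assms z by auto
    then obtain q' where "q = z # q'" "q' \<noteq> []" using q(1,3,4) by (cases q) (auto split: if_splits)
    then have "hd q' = y'" "walk_in (move_verts V x z) (move_edges E x y' z) q'" "z \<notin> set q'"
      using q(1,2) move_edges_new_leaf by (auto simp: walk_in_Cons)
    then have "walk_in V E q'" "hd q' = y'" using walk_in_move_edges by blast+
    then have "q' = P"
      using acyclic_path_unique[OF is_treeD(2,6)[OF tree]] P q(2,4) \<open>q = z # q'\<close> \<open>q' \<noteq> []\<close> by auto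
    then show "length (z # P) \<le> length q" using \<open>q = z # q'\<close> by simp
  qed (use \<open>P \<noteq> []\<close> P in auto)
  moreover have "gdist V E y' v = length P - 1"
    using gdist_acyclic[OF is_treeD(2,6)[OF tree] P(1,2)] P(3,4) by simp
  ultimately show ?thesis using \<open>P \<noteq> []\<close> by (cases P) auto
qed

lemma wiener_move_leaf:
  assumes "E x x'"
  shows "int (wiener (move_verts V x z) (move_edges E x y' z)) - int (wiener V E)
    = (\<Sum>v\<in>V - {x}. int (gdist V E y' v) - int (gdist V E x' v))"
proof -
  define A where "A = V - {x}"
  have "finite A" "x \<notin> A" "z \<notin> A" using is_treeD(1)[OF tree] z unfolding A_def by auto
  have V: "V = insert x A" using leaf_x unfolding A_def leaf_def by auto
  have V': "move_verts V x z = insert z A" unfolding A_def move_verts_def ..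
  let ?pairs = "\<lambda>V E. \<Sum>e\<in>{e. e \<subseteq> A \<and> card e = 2}. THE d. \<exists>u v. e = {u, v} \<and> d = gdist V E u v"
  have "?pairs (move_verts V x z) (move_edges E x y' z) = ?pairs V E"
  proof (rule sum.cong[OF refl])
    fix e assume "e \<in> {e. e \<subseteq> A \<and> card e = 2}"
    then obtain u v where "e = {u, v}" "u \<in> A" "v \<in> A" by (auto simp: card_2_iff)
    then show "(THE d. \<exists>u v. e = {u, v} \<and> d = gdist (move_verts V x z) (move_edges E x y' z) u v)
      = (THE d. \<exists>u v. e = {u, v} \<and> d = gdist V E u v)"
      using gdist_move_edges the_gdist_doubleton[OF symp_move_edges]
        the_gdist_doubleton[OF is_treeD(2)[OF tree]]
      unfolding A_def by simp
  qed
  moreover have "wiener V E = ?pairs V E + (\<Sum>v\<in>A. gdist V E x v)"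
    using wiener_insert[OF \<open>finite A\<close> \<open>x \<notin> A\<close> is_treeD(2)[OF tree]] unfolding V[symmetric] .
  moreover have "wiener (move_verts V x z) (move_edges E x y' z)
      = ?pairs (move_verts V x z) (move_edges E x y' z)
      + (\<Sum>v\<in>A. gdist (move_verts V x z) (move_edges E x y' z) z v)"
    using wiener_insert[OF \<open>finite A\<close> \<open>z \<notin> A\<close> symp_move_edges] unfolding V'[symmetric] .
  moreover have "gdist (move_verts V x z) (move_edges E x y' z) z v = gdist V E y' v + 1"
    and "gdist V E x v = gdist V E x' v + 1" if "v \<in> A" for v
    using that gdist_move_edges_new_leaf gdist_leaf[OF tree leaf_x assms] unfolding A_def by auto
  ultimately show ?thesis
    unfolding A_def by (simp add: sum_subtractf[symmetric])
qed

end

section \<open>The path between two leaves\<close>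

lemma sum_centered_eq_0: "(\<Sum>j=1..m. int (Suc m) - 2 * int j) = 0"
  using double_gauss_sum_from_Suc_0[of m, where 'a = int]
  by (simp add: sum_subtractf sum_distrib_left[symmetric])

context
  fixes V :: "'a set" and E :: "'a \<Rightarrow> 'a \<Rightarrow> bool" and x y :: 'a and p :: "'a list"
  assumes tree: "is_tree V E" and leaf_x: "leaf V E x" and leaf_y: "leaf V E y"
    and "x \<noteq> y" "\<not> E x y" and path: "is_path V E p x y"
begin

lemma path_walk: "walk_in V E p" "distinct p"
  using path by (auto simp: is_path_def)

lemma length_path: "3 \<le> length p"
proof -
  have "p \<noteq> []" "hd p = x" "last p = y" using path by (auto simp: is_path_def)
  then consider a where "p = [a]" | a b where "p = [a, b]" | a b c r where "p = a # b # c # r"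
    by (metis list.exhaust)
  then show ?thesis
    using \<open>hd p = x\<close> \<open>last p = y\<close> path_walk(1) \<open>x \<noteq> y\<close> \<open>\<not> E x y\<close> by cases auto
qed

lemma x_in_path: "x \<in> set p"
  using path hd_in_set by (auto simp: is_path_def walk_in_def)

lemma path_first: "p ! 0 = x" and path_last: "p ! (length p - 1) = y"
proof -
  have "p \<noteq> []" using length_path by auto
  then show "p ! 0 = x" "p ! (length p - 1) = y"
    using path by (auto simp: is_path_def hd_conv_nth last_conv_nth)
qed

lemma path_first_edge: "E x (p ! 1)"
  using walk_in_nth_edge[OF path_walk(1), of 0] length_path path_first by simp

lemma path_last_edge: "E y (p ! (length p - 2))"
  using walk_in_nth_edge[OF path_walk(1), of "length p - 2"] length_path path_last
    is_treeD(2)[OF tree]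
  by (simp add: Suc_diff_Suc numeral_2_eq_2 sympD)

lemma x_neighbour: "E x a \<Longrightarrow> a = p ! 1"
  using leaf_neighbour_unique[OF leaf_x _ path_first_edge] is_treeD(5)[OF tree] path_first_edge
  by blast

lemma y_neighbour: "E y a \<Longrightarrow> a = p ! (length p - 2)"
  using leaf_neighbour_unique[OF leaf_y _ path_last_edge] is_treeD(5)[OF tree] path_last_edge
  by blast

lemma branch_verts_cover: "V - set p \<subseteq> (\<Union>i\<in>{1..length p - 2}. branch_verts V E p i)"
proof
  fix v assume v: "v \<in> V - set p"
  have "x \<in> V" using leaf_x by (simp add: leaf_def)
  then obtain W where W: "walk_in V E W" "hd W = v" "last W = x"
    using is_treeD(7)[OF tree] v unfolding reach_in_def by blast
  obtain ys b zs where W_split: "W = ys @ b # zs" and "b \<in> set p" and ys: "set ys \<inter> set p = {}"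
    using split_list_first_propE[of W "\<lambda>v. v \<in> set p"] W x_in_path
    by (metis disjoint_iff last_in_set walk_in_Nil)
  have "ys \<noteq> []" using W(2) W_split v \<open>b \<in> set p\<close> by auto
  then have "walk_in V E ys" "E (last ys) b"
    using W(1) W_split walk_in_append[of ys "b # zs"] by auto
  then have "walk_in (V - set p) E ys" using walk_in_subset ys by (blast intro: walk_in_mono)
  obtain i where i: "i < length p" "b = p ! i" using \<open>b \<in> set p\<close> by (auto simp: in_set_conv_nth)
  have "v \<in> branch_verts V E p i"
    unfolding branch_verts_def reach_in_def
    using v \<open>walk_in (V - set p) E ys\<close> \<open>E (last ys) b\<close> W(2) W_split \<open>ys \<noteq> []\<close> i(2) by auto
  moreover have "last ys \<notin> set p" using ys last_in_set[OF \<open>ys \<noteq> []\<close>] by blast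
  then have "i \<noteq> 0" "i \<noteq> length p - 1"
    using x_neighbour y_neighbour \<open>E (last ys) b\<close> i path_first path_last length_path
      is_treeD(2)[OF tree] by (force dest: sympD)+
  ultimately show "v \<in> (\<Union>i\<in>{1..length p - 2}. branch_verts V E p i)" using i(1) by auto
qed

lemma gdist_diff_path_vertex:
  assumes "1 \<le> j" "j < length p"
  shows "int (gdist V E (p ! (length p - 2)) (p ! j)) - int (gdist V E (p ! 1) (p ! j))
    = (if j = length p - 1 then 2 - int (length p - 1) else int (length p - 1) - 2 * int j)"
proof -
  note forest = is_treeD(2,6)[OF tree]
  have "gdist V E (p ! 1) (p ! j) = j - 1"
    using gdist_subpath[OF forest path_walk] assms by simp
  moreover have "gdist V E (p ! (length p - 2)) (p ! j)
      = (if j = length p - 1 then 1 else length p - 2 - j)"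
  proof (cases "j = length p - 1")
    case True
    then show ?thesis
      using gdist_subpath[OF forest path_walk, of "length p - 2" j] length_path by simp
  next
    case False
    then show ?thesis
      using gdist_subpath[OF forest path_walk, of j "length p - 2"] gdist_commute[OF forest(1)]
        assms
      by simp
  qed
  ultimately show ?thesis using assms length_path by simp
qed

lemma gdist_diff_branch_vertex:
  assumes "i \<in> {1..length p - 2}" "v \<in> branch_verts V E p i"
  shows "int (gdist V E (p ! (length p - 2)) v) - int (gdist V E (p ! 1) v)
    = int (length p - 1) - 2 * int i"
proof -
  note forest = is_treeD(2,6)[OF tree]
  obtain q where q: "walk_in (V - set p) E q" "distinct q" "E (p ! i) (hd q)" "last q = v"
    using branch_verts_path[OF forest(1) assms(2)] .
  have "i < length p" using assms(1) length_path by auto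
  then have "gdist V E (p ! k) v = gdist V E (p ! k) (p ! i) + length q" if "k < length p" for k
    using gdist_to_branch[OF forest path_walk _ that q(1-3)] q(4) by simp
  then show ?thesis
    using gdist_diff_path_vertex[of i] assms(1) length_path by auto
qed

lemma path_vertices_but_first: "(!) p ` {1..length p - 1} = set p - {x}"
proof
  show "(!) p ` {1..length p - 1} \<subseteq> set p - {x}"
  proof
    fix v assume "v \<in> (!) p ` {1..length p - 1}"
    then obtain j where "1 \<le> j" "j < length p" "v = p ! j" using length_path by auto
    moreover have "0 < length p" using \<open>j < length p\<close> by linarith
    ultimately show "v \<in> set p - {x}"
      using path_first nth_eq_iff_index_eq[OF path_walk(2) \<open>j < length p\<close> \<open>0 < length p\<close>]
      by auto
  qed
  show "set p - {x} \<subseteq> (!) p ` {1..length p - 1}"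
  proof
    fix v assume "v \<in> set p - {x}"
    then obtain j where "j < length p" "v = p ! j" "j \<noteq> 0"
      using path_first by (auto simp: in_set_conv_nth)
    then show "v \<in> (!) p ` {1..length p - 1}" by (intro image_eqI[of v _ j]) auto
  qed
qed

lemma sum_gdist_diff_path:
  "(\<Sum>v\<in>(!) p ` {1..length p - 1}.
      int (gdist V E (p ! (length p - 2)) v) - int (gdist V E (p ! 1) v))
    = 2 - int (length p - 1)"
proof -
  define h where "h v = int (gdist V E (p ! (length p - 2)) v) - int (gdist V E (p ! 1) v)" for v
  have "inj_on ((!) p) {1..length p - 1}"
    using path_walk(2) length_path by (auto simp: inj_on_def nth_eq_iff_index_eq)
  then have "(\<Sum>v\<in>(!) p ` {1..length p - 1}. h v) = (\<Sum>j\<in>{1..length p - 1}. h (p ! j))"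
    by (simp add: sum.reindex)
  also have "\<dots> = h (p ! (length p - 1)) + (\<Sum>j\<in>{1..length p - 2}. h (p ! j))"
  proof -
    have "{1..length p - 1} = insert (length p - 1) {1..length p - 2}"
      and "length p - 1 \<notin> {1..length p - 2}" using length_path by auto
    then show ?thesis by simp
  qed
  also have "(\<Sum>j\<in>{1..length p - 2}. h (p ! j))
      = (\<Sum>j=1..length p - 2. int (length p - 1) - 2 * int j)"
    using gdist_diff_path_vertex length_path unfolding h_def by (intro sum.cong) auto
  also have "\<dots> = 0"
    using sum_centered_eq_0[of "length p - 2"] length_path
    by (simp add: Suc_diff_Suc numeral_2_eq_2)
  finally show ?thesis
    using gdist_diff_path_vertex[of "length p - 1"] length_path unfolding h_def by simp
qed

lemma sum_gdist_diff_branches: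
  "(\<Sum>v\<in>(\<Union>i\<in>{1..length p - 2}. branch_verts V E p i).
      int (gdist V E (p ! (length p - 2)) v) - int (gdist V E (p ! 1) v))
    = (\<Sum>i\<in>{1..length p - 2}. (int (length p - 1) - 2 * int i) * int (card (branch_verts V E p i)))"
proof -
  have "\<forall>i\<in>{1..length p - 2}. \<forall>j\<in>{1..length p - 2}. i \<noteq> j \<longrightarrow>
      branch_verts V E p i \<inter> branch_verts V E p j = {}"
  proof (intro ballI impI)
    fix i j assume "i \<in> {1..length p - 2}" "j \<in> {1..length p - 2}" "i \<noteq> j"
    then have "i < length p" "j < length p" using length_path by auto
    then show "branch_verts V E p i \<inter> branch_verts V E p j = {}"
      using \<open>i \<noteq> j\<close> branch_verts_disjoint[OF is_treeD(2,6)[OF tree] path_walk]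
      by (metis Int_commute linorder_neqE_nat)
  qed
  moreover have "\<forall>i\<in>{1..length p - 2}. finite (branch_verts V E p i)"
    using is_treeD(1)[OF tree] by (auto simp: branch_verts_def)
  ultimately show ?thesis
    using gdist_diff_branch_vertex by (simp add: sum.UNION_disjoint mult.commute)
qed

lemma sum_gdist_diff:
  "(\<Sum>v\<in>V - {x}. int (gdist V E (p ! (length p - 2)) v) - int (gdist V E (p ! 1) v))
    = (\<Sum>i\<in>{1..length p - 2}. (int (length p - 1) - 2 * int i) * int (card (branch_verts V E p i)))
      - (int (length p - 1) - 2)"
proof -
  let ?P = "(!) p ` {1..length p - 1}" and ?B = "\<Union>i\<in>{1..length p - 2}. branch_verts V E p i"
  have "?B \<subseteq> V - set p" by (auto simp: branch_verts_def)
  then have "V - {x} = ?P \<union> ?B" and "?P \<inter> ?B = {}"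
    unfolding path_vertices_but_first
    using branch_verts_cover walk_in_subset[OF path_walk(1)] x_in_path by blast+
  moreover have "finite ?B" using \<open>?B \<subseteq> V - set p\<close> is_treeD(1)[OF tree] finite_subset by blast
  ultimately show ?thesis
    using sum_gdist_diff_path sum_gdist_diff_branches by (simp add: sum.union_disjoint)
qed

end

theorem mainTheorem10:
  fixes V :: "'a set" and E :: "'a \<Rightarrow> 'a \<Rightarrow> bool"
    and x y y' z :: 'a and p :: "'a list"
  assumes "is_tree V E"
    and "leaf V E x" and "leaf V E y" and "x \<noteq> y"
    and "\<not> E x y"
    and "is_path V E p x y"
    and "E y y'"
    and "z \<notin> V"
  shows "int (wiener (move_verts V x z) (move_edges E x y' z))
           - int (wiener V E)
         = (\<Sum>i\<in>{1..length p - 2}.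
              (int (length p - 1) - 2 * int i) * int (card (branch_verts V E p i)))
           - (int (length p - 1) - 2)"
proof -
  have "y' \<in> V" using is_treeD(5)[OF assms(1) assms(7)] .
  moreover have "y' \<noteq> x" using assms(5,7) is_treeD(2)[OF assms(1)] by (auto dest: sympD)
  moreover have "y' = p ! (length p - 2)" using y_neighbour[OF assms(1-7)] .
  ultimately show ?thesis
    using wiener_move_leaf[OF assms(1,2) _ _ assms(8) path_first_edge[OF assms(1-6)]]
      sum_gdist_diff[OF assms(1-6)] by simp
qed

end
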